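(* Let $V$ be a preference profile over a finite candidate set $C$ with a fixed tie-breaking order, and let $w$ be the 2-Approval winner at $V$. Then all Type 2 manipulators at $V$ (GS-manipulators $i$ with $w\in\mathrm{top}_2(v_i)$) have the same two top-ranked candidates in the same order; in particular they all manipulate in favour of the same candidate.
   Context: Each voter $i$ has a strict linear order $v_i$ over $C$; $\mathrm{top}_2(v)$ is the set of the two highest-ranked candidates of $v$. 2-Approval: each candidate gets one point from each voter ranking her among his top two; the highest score wins, ties broken in favour of the candidate highest in the fixed strict linear order on $C$. Write $\mathcal{R}$ for this rule and $(V_{-i},v_i')$ for $V$ with $v_i$ replaced by $v_i'$. A GS-manipulation of voter $i$ at $V$ is a vote $v_i'$ such that $i$ strictly prefers $\mathcal{R}(V_{-i},v_i')$ to $\mathcal{R}(V)$ and for every vote $v_i''$ either $\mathcal{R}(V_{-i},v_i'')=\mathcal{R}(V_{-i},v_i')$ or $i$ strictly prefers $\mathcal{R}(V_{-i},v_i')$ to $\mathcal{R}(V_{-i},v_i'')$; it is in favour of $\mathcal{R}(V_{-i},v_i')$; $i$ is a GS-manipulator if he has one. *)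

theory Defs
  imports Main
begin

text \<open>Candidates form a finite type 'c (so C = UNIV). A vote (strict linear order
over C) is a list enumerating all candidates without repetition, best first.\<close>

definition valid_vote :: "'c::finite list \<Rightarrow> bool" where
  "valid_vote v \<longleftrightarrow> distinct v \<and> set v = UNIV"

definition valid_profile :: "'c::finite list list \<Rightarrow> bool" where
  "valid_profile V \<longleftrightarrow> (\<forall>v \<in> set V. valid_vote v)"

definition top2 :: "'c list \<Rightarrow> 'c set" where
  "top2 v = set (take 2 v)"

definition prefers :: "'c list \<Rightarrow> 'c \<Rightarrow> 'c \<Rightarrow> bool" where
  "prefers v a b \<longleftrightarrow> (\<exists>k l. k < l \<and> l < length v \<and> v ! k = a \<and> v ! l = b)"

definition score2 :: "'c list list \<Rightarrow> 'c \<Rightarrow> nat" where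
  "score2 V c = length (filter (\<lambda>v. c \<in> top2 v) V)"

definition approval2 :: "'c list \<Rightarrow> 'c list list \<Rightarrow> 'c" where
  "approval2 tb V = hd (filter (\<lambda>c. \<forall>d. score2 V d \<le> score2 V c) tb)"

definition GS_manipulation :: "'c::finite list \<Rightarrow> 'c list list \<Rightarrow> nat \<Rightarrow> 'c list \<Rightarrow> bool" where
  "GS_manipulation tb V i v' \<longleftrightarrow>
     valid_vote v' \<and>
     prefers (V ! i) (approval2 tb (V[i := v'])) (approval2 tb V) \<and>
     (\<forall>v''. valid_vote v'' \<longrightarrow>
        approval2 tb (V[i := v'']) = approval2 tb (V[i := v']) \<or>
        prefers (V ! i) (approval2 tb (V[i := v'])) (approval2 tb (V[i := v''])))"

definition GS_manipulator :: "'c::finite list \<Rightarrow> 'c list list \<Rightarrow> nat \<Rightarrow> bool" where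
  "GS_manipulator tb V i \<longleftrightarrow> i < length V \<and> (\<exists>v'. GS_manipulation tb V i v')"

definition type2_manipulator :: "'c::finite list \<Rightarrow> 'c list list \<Rightarrow> nat \<Rightarrow> bool" where
  "type2_manipulator tb V i \<longleftrightarrow> GS_manipulator tb V i \<and> approval2 tb V \<in> top2 (V ! i)"

end

theory Submission
  imports Defs
begin

text \<open>A Type 2 manipulator i ranks the current winner w second and the candidate a he
manipulates for first, since a must be preferred to w and w lies in his top two. When i
leaves his top two, a can only lose points and every other candidate can only gain them.
So if two Type 2 manipulators pushed for different candidates a and b (each with w as
second choice), a's winning in one deviation and b's in the other forces a and b to have
the same score in both deviated profiles; the tie-break would then have to prefer a to b
and b to a.\<close>

lemma approval2_eq_first_max:
  fixes tb :: "'c::finite list"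
  assumes "valid_vote tb"
  obtains us vs where "tb = us @ approval2 tb V # vs"
    and "\<forall>d. score2 V d \<le> score2 V (approval2 tb V)"
    and "\<forall>u\<in>set us. \<exists>d. score2 V u < score2 V d"
proof -
  define P where "P = (\<lambda>c. \<forall>d. score2 V d \<le> score2 V c)"
  obtain c where "score2 V c = Max (range (score2 V))"
    using Max_in[of "range (score2 V)"] by fastforce
  hence "P c" by (simp add: P_def)
  moreover have "c \<in> set tb" using assms by (simp add: valid_vote_def)
  ultimately obtain W rest where fe: "filter P tb = W # rest"
    by (cases "filter P tb") (auto simp: filter_empty_conv)
  have "approval2 tb V = W" using fe by (simp add: approval2_def P_def)
  with filter_eq_ConsD[OF fe] show ?thesis
    by (auto simp: P_def not_le intro: that)
qed

lemma score2_le_approval2: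
  "valid_vote tb \<Longrightarrow> score2 V d \<le> score2 V (approval2 tb V)"
  by (metis approval2_eq_first_max)

lemma approval2_tie_prefers:
  fixes tb :: "'c::finite list"
  assumes tb: "valid_vote tb"
    and tie: "score2 V d = score2 V (approval2 tb V)" and "d \<noteq> approval2 tb V"
  shows "prefers tb (approval2 tb V) d"
proof -
  obtain us vs where tb_eq: "tb = us @ approval2 tb V # vs"
    and max: "\<forall>d. score2 V d \<le> score2 V (approval2 tb V)"
    and before: "\<forall>u\<in>set us. \<exists>d. score2 V u < score2 V d"
    using approval2_eq_first_max[OF tb] .
  obtain w where w: "approval2 tb V = w" by simp
  have "d \<notin> set us" using before max tie by (metis leD)
  moreover have "d \<in> set tb" using tb by (simp add: valid_vote_def)
  ultimately have "d \<in> set vs" using \<open>d \<noteq> approval2 tb V\<close> tb_eq w by auto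
  then obtain n where "n < length vs" "vs ! n = d" by (auto simp: in_set_conv_nth)
  then show ?thesis
    unfolding prefers_def w using tb_eq w
    by (intro exI[of _ "length us"] exI[of _ "Suc (length us + n)"]) (simp add: nth_append)
qed

lemma prefers_asym:
  assumes "distinct v" "prefers v a b" shows "\<not> prefers v b a"
proof
  assume "prefers v b a"
  with assms obtain k l k' l' where
    "k < l" "l < length v" "v ! k = a" "v ! l = b"
    "k' < l'" "l' < length v" "v ! k' = b" "v ! l' = a"
    by (auto simp: prefers_def)
  with \<open>distinct v\<close> have "k = l'" "l = k'"
    by (metis nth_eq_iff_index_eq order.strict_trans)+
  with \<open>k < l\<close> \<open>k' < l'\<close> show False by simp
qed

lemma score2_list_update:
  assumes "i < length V"
  shows "score2 (V[i := x]) c + (if c \<in> top2 (V ! i) then 1 else 0)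
         = score2 V c + (if c \<in> top2 x then 1 else 0)"
proof -
  obtain xs y ys where "V = xs @ y # ys" "length xs = i"
    using id_take_nth_drop[OF assms] assms by (metis length_take min.absorb4)
  then show ?thesis by (auto simp: score2_def list_update_append nth_append)
qed

lemma score2_list_update_le:
  "i < length V \<Longrightarrow> c \<in> top2 (V ! i) \<Longrightarrow> score2 (V[i := x]) c \<le> score2 V c"
  using score2_list_update[of i V x c] by (auto split: if_splits)

lemma score2_list_update_ge:
  "i < length V \<Longrightarrow> c \<notin> top2 (V ! i) \<Longrightarrow> score2 V c \<le> score2 (V[i := x]) c"
  using score2_list_update[of i V x c] by (auto split: if_splits)

lemma valid_profile_distinct:
  "valid_profile V \<Longrightarrow> i < length V \<Longrightarrow> distinct (V ! i)"
  by (simp add: valid_profile_def valid_vote_def)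

lemma type2_manipulator_length: "type2_manipulator tb V i \<Longrightarrow> i < length V"
  by (simp add: type2_manipulator_def GS_manipulator_def)

lemma type2_manipulation_take2:
  fixes tb :: "'c::finite list"
  assumes vp: "valid_profile V" and t2: "type2_manipulator tb V i"
    and m: "GS_manipulation tb V i v'"
  shows "take 2 (V ! i) = [approval2 tb (V[i := v']), approval2 tb V]"
proof -
  let ?v = "V ! i"
  have dv: "distinct ?v" using valid_profile_distinct[OF vp type2_manipulator_length[OF t2]] .
  from m obtain k l where kl: "k < l" "l < length ?v"
      "?v ! k = approval2 tb (V[i := v'])" "?v ! l = approval2 tb V"
    by (auto simp: GS_manipulation_def prefers_def)
  have "approval2 tb V \<in> set (take 2 ?v)"
    using t2 by (simp add: type2_manipulator_def top2_def)
  then obtain m where "m < 2" "m < length ?v" "?v ! m = approval2 tb V"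
    by (auto simp: in_set_conv_nth)
  with kl dv have "l = m" by (metis nth_eq_iff_index_eq)
  with kl \<open>m < 2\<close> have "k = 0" "l = 1" by auto
  with kl show ?thesis
    by (cases ?v; cases "tl ?v") (auto simp: numeral_2_eq_2)
qed

lemma type2_manipulations_same_winner:
  fixes tb :: "'c::finite list"
  assumes tb: "valid_vote tb" and vp: "valid_profile V"
    and ti: "type2_manipulator tb V i" and tj: "type2_manipulator tb V j"
    and mi: "GS_manipulation tb V i v'" and mj: "GS_manipulation tb V j v''"
  shows "approval2 tb (V[i := v']) = approval2 tb (V[j := v''])"
proof (rule ccontr)
  let ?Vi = "V[i := v']" and ?Vj = "V[j := v'']"
  let ?a = "approval2 tb ?Vi" and ?b = "approval2 tb ?Vj"
  assume ne: "?a \<noteq> ?b"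
  have il: "i < length V" and jl: "j < length V"
    using ti tj by (simp_all add: type2_manipulator_length)
  have "distinct (take 2 (V ! i))" "distinct (take 2 (V ! j))"
    using valid_profile_distinct[OF vp] il jl by simp_all
  with type2_manipulation_take2[OF vp ti mi] type2_manipulation_take2[OF vp tj mj]
  have top_i: "top2 (V ! i) = {?a, approval2 tb V}" "?a \<noteq> approval2 tb V"
    and top_j: "top2 (V ! j) = {?b, approval2 tb V}" "?b \<noteq> approval2 tb V"
    by (simp_all add: top2_def)
  have "score2 ?Vi ?b \<le> score2 ?Vi ?a" "score2 ?Vj ?a \<le> score2 ?Vj ?b"
    using score2_le_approval2[OF tb] by blast+
  moreover have "score2 ?Vi ?a \<le> score2 V ?a" "score2 V ?b \<le> score2 ?Vi ?b"
    using score2_list_update_le[OF il] score2_list_update_ge[OF il] top_i top_j ne by auto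
  moreover have "score2 ?Vj ?b \<le> score2 V ?b" "score2 V ?a \<le> score2 ?Vj ?a"
    using score2_list_update_le[OF jl] score2_list_update_ge[OF jl] top_i top_j ne by auto
  ultimately have "score2 ?Vi ?b = score2 ?Vi ?a" "score2 ?Vj ?a = score2 ?Vj ?b"
    by linarith+
  with ne have "prefers tb ?a ?b" "prefers tb ?b ?a"
    using approval2_tie_prefers[OF tb] by metis+
  with tb show False using prefers_asym by (metis valid_vote_def)
qed

theorem mainTheorem10:
  fixes tb :: "'c::finite list" and V :: "'c list list"
  assumes "valid_vote tb" and "valid_profile V"
    and "type2_manipulator tb V i" and "type2_manipulator tb V j"
  shows "take 2 (V ! i) = take 2 (V ! j) \<and>
         (\<forall>v' v''. GS_manipulation tb V i v' \<longrightarrow> GS_manipulation tb V j v'' \<longrightarrow>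
            approval2 tb (V[i := v']) = approval2 tb (V[j := v'']))"
proof
  obtain v' v'' where v': "GS_manipulation tb V i v'" and v'': "GS_manipulation tb V j v''"
    using assms(3,4) by (auto simp: type2_manipulator_def GS_manipulator_def)
  show "take 2 (V ! i) = take 2 (V ! j)"
    using type2_manipulation_take2[OF assms(2,3) v'] type2_manipulation_take2[OF assms(2,4) v'']
      type2_manipulations_same_winner[OF assms v' v''] by simp
  show "\<forall>v' v''. GS_manipulation tb V i v' \<longrightarrow> GS_manipulation tb V j v'' \<longrightarrow>
          approval2 tb (V[i := v']) = approval2 tb (V[j := v''])"
    using type2_manipulations_same_winner[OF assms] by blast
qed

end
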